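(* $$\sum_{n\ge0}|\mathfrak S_n(1243,2143,231)|x^n=1+x\frac{(x-1)^2}{(2x-1)^2},$$ and consequently $|\mathfrak S_n(1243,2143,231)|=(n+2)2^{n-3}$ for all $n\ge2$.
   Context: $\mathfrak S_n(R)$ is the set of permutations of $\{1,\dots,n\}$ avoiding every pattern in $R$, where $\pi$ avoids $\sigma$ if no subsequence of $\pi$ has the same relative order as $\sigma$. *)

theory Defs
  imports Main "HOL-Computational_Algebra.Formal_Power_Series"
begin

definition perms :: "nat \<Rightarrow> nat list set" where
  "perms n = {p. distinct p \<and> set p = {1..n}}"

definition contains :: "nat list \<Rightarrow> nat list \<Rightarrow> bool" where
  "contains p s \<longleftrightarrow> (\<exists>f. strict_mono_on {..<length s} f
      \<and> (\<forall>a<length s. f a < length p)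
      \<and> (\<forall>a<length s. \<forall>b<length s. (p ! f a < p ! f b) \<longleftrightarrow> (s ! a < s ! b)))"

definition avoids :: "nat list \<Rightarrow> nat list \<Rightarrow> bool" where
  "avoids p s \<longleftrightarrow> \<not> contains p s"

definition Av :: "nat \<Rightarrow> nat list set \<Rightarrow> nat list set" where
  "Av n R = {p \<in> perms n. \<forall>s\<in>R. avoids p s}"

end

theory Submission
  imports Defs "HOL-Library.Sublist" "HOL-Combinatorics.Multiset_Permutations"
begin

text \<open>
  Write a permutation of \<open>{1..n+1}\<close> avoiding 231 as \<open>u (n+1) v\<close>; then every entry of \<open>u\<close> is
  smaller than every entry of \<open>v\<close>. If moreover 1243 and 2143 are avoided and \<open>v\<close> is nonempty,
  \<open>u\<close> has at most one entry (two entries of \<open>u\<close>, then \<open>n+1\<close>, then an entry of \<open>v\<close> would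
  form one of these patterns), and if it has one, it is 1 and \<open>v\<close> is a shifted permutation
  avoiding 231 and 132, since 1 followed by a 132 is a 1243. Appending or prepending \<open>n+1\<close>
  preserves avoidance of all these patterns, so the same decomposition gives \<open>2^(n-1)\<close>
  permutations avoiding 132 and 231, and \<open>a(n+1) = 2 a(n) + 2^(n-2)\<close> for \<open>n \<ge> 2\<close>. This solves
  to \<open>a(n) = (n+2) 2^(n-3)\<close>, whose generating function is the stated rational one.
\<close>

section \<open>Subsequences and pattern containment\<close>

lemma subseq_imp_strict_mono_indices:
  assumes "subseq xs ys"
  shows "\<exists>f. strict_mono_on {..<length xs} f \<and> (\<forall>i<length xs. f i < length ys \<and> xs ! i = ys ! f i)"
  using assms
proof (induction rule: list_emb.induct)
  case (list_emb_Nil ys)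
  then show ?case by (auto intro: strict_mono_onI)
next
  case (list_emb_Cons xs ys y)
  then obtain f where "strict_mono_on {..<length xs} f" "\<forall>i<length xs. f i < length ys \<and> xs ! i = ys ! f i"
    by blast
  then show ?case
    by (intro exI[of _ "Suc \<circ> f"]) (auto intro!: strict_mono_onI dest: strict_mono_onD)
next
  case (list_emb_Cons2 x y xs ys)
  then obtain f where f: "strict_mono_on {..<length xs} f" "\<forall>i<length xs. f i < length ys \<and> xs ! i = ys ! f i"
    by blast
  have "strict_mono_on {..<length (x # xs)} (case_nat 0 (Suc \<circ> f))"
    by (rule strict_mono_onI) (auto split: nat.splits intro!: strict_mono_onD[OF f(1)])
  with f list_emb_Cons2.hyps show ?case
    by (intro exI[of _ "case_nat 0 (Suc \<circ> f)"]) (auto simp: nth_Cons split: nat.splits)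
qed

lemma strict_mono_indices_imp_subseq:
  assumes "strict_mono_on {..<length xs} f" "\<forall>i<length xs. f i < length ys \<and> xs ! i = ys ! f i"
  shows "subseq xs ys"
  using assms
proof (induction xs arbitrary: ys rule: rev_induct)
  case Nil
  then show ?case by simp
next
  case (snoc x xs)
  have mono: "strict_mono_on {..<Suc (length xs)} f"
    and idx: "\<forall>i<Suc (length xs). f i < length ys \<and> (xs @ [x]) ! i = ys ! f i"
    using snoc.prems by auto
  define k where "k = f (length xs)"
  have below_k: "f i < k" if "i < length xs" for i
    using that strict_mono_onD[OF mono] by (simp add: k_def)
  have "subseq xs (take k ys)"
  proof (rule snoc.IH)
    show "strict_mono_on {..<length xs} f"
      using mono by (rule monotone_on_subset) auto
    show "\<forall>i<length xs. f i < length (take k ys) \<and> xs ! i = take k ys ! f i"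
    proof (intro allI impI)
      fix i assume "i < length xs"
      with below_k[of i] idx[rule_format, of i]
      show "f i < length (take k ys) \<and> xs ! i = take k ys ! f i"
        by (auto simp: nth_append)
    qed
  qed
  moreover have "k < length ys" "x = ys ! k"
    using idx by (auto simp: k_def)
  ultimately have "subseq (xs @ [x]) (take (Suc k) ys)"
    by (simp add: take_Suc_conv_app_nth)
  then show ?case
    by (rule subseq_order.order_trans) (rule prefix_imp_subseq, rule take_is_prefix)
qed

lemma set_mono_subseq: "subseq xs ys \<Longrightarrow> set xs \<subseteq> set ys"
  by (induction rule: list_emb.induct) auto

lemma subseq_Cons_Cons_tail: "subseq (x # xs) (y # ys) \<Longrightarrow> subseq xs ys"
  by (metis subseq_Cons' subseq_Cons2_iff)

definition order_isomorphic :: "nat list \<Rightarrow> nat list \<Rightarrow> bool" where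
  "order_isomorphic xs s \<longleftrightarrow> length xs = length s \<and>
     (\<forall>a<length s. \<forall>b<length s. xs ! a < xs ! b \<longleftrightarrow> s ! a < s ! b)"

lemma order_isomorphic_length: "order_isomorphic xs s \<Longrightarrow> length xs = length s"
  by (simp add: order_isomorphic_def)

lemma order_isomorphic_less_iff:
  "order_isomorphic xs s \<Longrightarrow> a < length s \<Longrightarrow> b < length s \<Longrightarrow> xs ! a < xs ! b \<longleftrightarrow> s ! a < s ! b"
  by (simp add: order_isomorphic_def)

lemma contains_iff_subseq: "contains p s \<longleftrightarrow> (\<exists>xs. subseq xs p \<and> order_isomorphic xs s)"
proof
  assume "contains p s"
  then obtain f where f: "strict_mono_on {..<length s} f" "\<forall>a<length s. f a < length p"
    "\<forall>a<length s. \<forall>b<length s. p ! f a < p ! f b \<longleftrightarrow> s ! a < s ! b"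
    unfolding contains_def by blast
  define xs where "xs = map (\<lambda>a. p ! f a) [0..<length s]"
  have "subseq xs p"
    using f by (intro strict_mono_indices_imp_subseq[of xs f]) (auto simp: xs_def)
  moreover have "order_isomorphic xs s"
    using f by (simp add: order_isomorphic_def xs_def)
  ultimately show "\<exists>xs. subseq xs p \<and> order_isomorphic xs s" by blast
next
  assume "\<exists>xs. subseq xs p \<and> order_isomorphic xs s"
  then obtain xs f where "order_isomorphic xs s" "strict_mono_on {..<length xs} f"
    "\<forall>i<length xs. f i < length p \<and> xs ! i = p ! f i"
    using subseq_imp_strict_mono_indices by blast
  then show "contains p s"
    unfolding contains_def order_isomorphic_def by metis
qed

lemma contains_subseq_mono: "subseq q p \<Longrightarrow> contains q s \<Longrightarrow> contains p s"
  unfolding contains_iff_subseq by (meson subseq_order.order_trans)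

lemma contains_map_strict_mono:
  assumes "strict_mono f"
  shows "contains (map f p) s \<longleftrightarrow> contains p s"
  unfolding contains_def using assms by (auto simp: strict_mono_less)

lemma contains_snoc_new_occurrence:
  assumes "contains (u @ [m]) s" "\<not> contains u s"
  obtains xs where "subseq xs u" "order_isomorphic (xs @ [m]) s"
proof -
  obtain xs where sub: "subseq xs (u @ [m])" and iso: "order_isomorphic xs s"
    using assms(1) unfolding contains_iff_subseq by blast
  then obtain ys zs where xs: "xs = ys @ zs" "subseq ys u" "subseq zs [m]"
    by (auto elim: subseq_appendE)
  have "zs \<noteq> []"
    using xs iso assms(2) unfolding contains_iff_subseq by auto
  with xs(3) have "zs = [m]"
    by (cases zs) (auto split: if_splits)
  with xs iso show thesis
    using that by blast
qed

lemma contains_Cons_new_occurrence: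
  assumes "contains (m # u) s" "\<not> contains u s"
  obtains xs where "subseq xs u" "order_isomorphic (m # xs) s"
proof -
  obtain xs where sub: "subseq xs (m # u)" and iso: "order_isomorphic xs s"
    using assms(1) unfolding contains_iff_subseq by blast
  have "\<not> subseq xs u"
    using iso assms(2) unfolding contains_iff_subseq by blast
  with sub obtain ys where "xs = m # ys" "subseq ys u"
    by (cases xs) (auto split: if_splits)
  with iso show thesis
    using that by blast
qed

lemma contains_snoc_greater_iff:
  assumes u: "\<forall>x\<in>set u. x < m" and s: "\<exists>x\<in>set s. last s < x"
  shows "contains (u @ [m]) s \<longleftrightarrow> contains u s"
proof
  assume "contains (u @ [m]) s"
  show "contains u s"
  proof (rule ccontr)
    assume "\<not> contains u s"
    with \<open>contains (u @ [m]) s\<close> obtain xs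
      where sub: "subseq xs u" and iso: "order_isomorphic (xs @ [m]) s"
      by (rule contains_snoc_new_occurrence)
    from s obtain j where j: "j < length s" "last s < s ! j"
      by (auto simp: in_set_conv_nth)
    have len: "length s = Suc (length xs)"
      using order_isomorphic_length[OF iso] by simp
    then have "last s = s ! length xs"
      by (cases s rule: rev_cases) (auto simp: nth_append)
    with j len have "j < length xs" "s ! length xs < s ! j"
      using less_Suc_eq by auto
    with order_isomorphic_less_iff[OF iso, of "length xs" j] len have "m < xs ! j"
      by (simp add: nth_append)
    moreover have "xs ! j \<in> set u"
      using \<open>j < length xs\<close> set_mono_subseq[OF sub] by auto
    ultimately show False
      using u by auto
  qed
next
  assume "contains u s"
  then show "contains (u @ [m]) s"
    by (rule contains_subseq_mono[OF subseq_rev_drop_many[OF subseq_order.order_refl]])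
qed

lemma contains_Cons_greater_iff:
  assumes u: "\<forall>x\<in>set u. x < m" and s: "\<exists>x\<in>set s. hd s < x"
  shows "contains (m # u) s \<longleftrightarrow> contains u s"
proof
  assume "contains (m # u) s"
  show "contains u s"
  proof (rule ccontr)
    assume "\<not> contains u s"
    with \<open>contains (m # u) s\<close> obtain xs
      where sub: "subseq xs u" and iso: "order_isomorphic (m # xs) s"
      by (rule contains_Cons_new_occurrence)
    from s obtain j where j: "j < length s" "hd s < s ! j"
      by (auto simp: in_set_conv_nth)
    then have ne: "s \<noteq> []"
      by auto
    with j have "j \<noteq> 0"
      by (metis hd_conv_nth less_irrefl)
    with j ne order_isomorphic_less_iff[OF iso, of 0 j] have "m < xs ! (j - 1)"
      by (simp add: nth_Cons' hd_conv_nth)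
    have "j - 1 < length xs"
      using j \<open>j \<noteq> 0\<close> order_isomorphic_length[OF iso] by simp
    then have "xs ! (j - 1) \<in> set u"
      using set_mono_subseq[OF sub] by auto
    with \<open>m < xs ! (j - 1)\<close> show False
      using u by auto
  qed
next
  assume "contains u s"
  then show "contains (m # u) s"
    by (rule contains_subseq_mono[OF list_emb_Cons[OF subseq_order.order_refl]])
qed

lemma contains_Cons_less_iff:
  assumes u: "\<forall>x\<in>set u. m < x" and s: "\<exists>x\<in>set s. x < hd s"
  shows "contains (m # u) s \<longleftrightarrow> contains u s"
proof
  assume "contains (m # u) s"
  show "contains u s"
  proof (rule ccontr)
    assume "\<not> contains u s"
    with \<open>contains (m # u) s\<close> obtain xs
      where sub: "subseq xs u" and iso: "order_isomorphic (m # xs) s"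
      by (rule contains_Cons_new_occurrence)
    from s obtain j where j: "j < length s" "s ! j < hd s"
      by (auto simp: in_set_conv_nth)
    then have ne: "s \<noteq> []"
      by auto
    with j have "j \<noteq> 0"
      by (metis hd_conv_nth less_irrefl)
    with j ne order_isomorphic_less_iff[OF iso, of j 0] have "xs ! (j - 1) < m"
      by (simp add: nth_Cons' hd_conv_nth)
    have "j - 1 < length xs"
      using j \<open>j \<noteq> 0\<close> order_isomorphic_length[OF iso] by simp
    then have "xs ! (j - 1) \<in> set u"
      using set_mono_subseq[OF sub] by auto
    with \<open>xs ! (j - 1) < m\<close> show False
      using u by auto
  qed
next
  assume "contains u s"
  then show "contains (m # u) s"
    by (rule contains_subseq_mono[OF list_emb_Cons[OF subseq_order.order_refl]])
qed


lemma contains_231: "contains p [2,3,1] \<longleftrightarrow> (\<exists>a b c. subseq [a,b,c] p \<and> c < a \<and> a < b)"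
  unfolding contains_iff_subseq order_isomorphic_def
  by (auto simp: length_Suc_conv numeral_eq_Suc All_less_Suc) fastforce+

lemma contains_132: "contains p [1,3,2] \<longleftrightarrow> (\<exists>a b c. subseq [a,b,c] p \<and> a < c \<and> c < b)"
  unfolding contains_iff_subseq order_isomorphic_def
  by (auto simp: length_Suc_conv numeral_eq_Suc All_less_Suc) fastforce+

lemma contains_1243:
  "contains p [1,2,4,3] \<longleftrightarrow> (\<exists>a b c d. subseq [a,b,c,d] p \<and> a < b \<and> b < d \<and> d < c)"
  unfolding contains_iff_subseq order_isomorphic_def
  by (auto simp: length_Suc_conv numeral_eq_Suc All_less_Suc) fastforce+

lemma contains_2143:
  "contains p [2,1,4,3] \<longleftrightarrow> (\<exists>a b c d. subseq [a,b,c,d] p \<and> b < a \<and> a < d \<and> d < c)"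
  unfolding contains_iff_subseq order_isomorphic_def
  by (auto simp: length_Suc_conv numeral_eq_Suc All_less_Suc) fastforce+

lemma contains_Cons_less_1243_iff:
  assumes "\<forall>x\<in>set v. m < x"
  shows "contains (m # v) [1,2,4,3] \<longleftrightarrow> contains v [1,3,2]"
proof
  assume "contains (m # v) [1,2,4,3]"
  then obtain a b c d where sub: "subseq [a,b,c,d] (m # v)" and "b < d" "d < c"
    unfolding contains_1243 by blast
  from subseq_Cons_Cons_tail[OF sub] \<open>b < d\<close> \<open>d < c\<close> show "contains v [1,3,2]"
    unfolding contains_132 by blast
next
  assume "contains v [1,3,2]"
  then obtain a b c where abc: "subseq [a,b,c] v" "a < c" "c < b"
    unfolding contains_132 by blast
  moreover have "m < a"
    using assms set_mono_subseq[OF abc(1)] by auto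
  ultimately show "contains (m # v) [1,2,4,3]"
    unfolding contains_1243 by (intro exI[of _ m] exI[of _ a] exI[of _ b] exI[of _ c]) simp
qed

lemma contains_Cons_2143_imp_132: "contains (m # v) [2,1,4,3] \<Longrightarrow> contains v [1,3,2]"
proof -
  assume "contains (m # v) [2,1,4,3]"
  then obtain a b c d where sub: "subseq [a,b,c,d] (m # v)" and "b < a" "a < d" "d < c"
    unfolding contains_2143 by blast
  from subseq_Cons_Cons_tail[OF sub] \<open>b < a\<close> \<open>a < d\<close> \<open>d < c\<close> show "contains v [1,3,2]"
    unfolding contains_132 using less_trans by blast
qed

lemma subseq_imp_contains_1243_or_2143:
  assumes "subseq [x1, x2, m, y] p" "x1 \<noteq> x2" "x1 < y" "x2 < y" "y < m"
  shows "contains p [1,2,4,3] \<or> contains p [2,1,4,3]"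
proof (cases "x1 < x2")
  case True
  with assms show ?thesis
    unfolding contains_1243 by blast
next
  case False
  with assms(2) have "x2 < x1"
    by simp
  with assms show ?thesis
    unfolding contains_2143 by blast
qed

lemma not_contains_231_split_less:
  assumes "\<not> contains (u @ m # v) [2,3,1]" "x \<in> set u" "y \<in> set v" "x < m" "x \<noteq> y"
  shows "x < y"
proof (rule ccontr)
  assume "\<not> x < y"
  with assms(5) have "y < x"
    by simp
  have "subseq ([x] @ [m, y]) (u @ m # v)"
    using assms(2,3) by (intro list_emb_append_mono) (simp_all add: subseq_singleton_left)
  with \<open>y < x\<close> assms(4) have "contains (u @ m # v) [2,3,1]"
    unfolding contains_231 by auto
  with assms(1) show False
    by contradiction
qed


section \<open>Permutations and avoidance classes\<close>

lemma perms_eq_permutations_of_set: "perms n = permutations_of_set {1..n}"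
  by (auto simp: perms_def permutations_of_set_def)

lemma finite_perms: "finite (perms n)"
  by (simp add: perms_eq_permutations_of_set)

lemma finite_Av: "finite (Av n R)"
  by (rule finite_subset[OF _ finite_perms]) (auto simp: Av_def)

lemma Av_eq_perms_if_patterns_longer:
  assumes "\<forall>s\<in>R. n < length s"
  shows "Av n R = perms n"
proof -
  have "\<not> contains p s" if "p \<in> perms n" "s \<in> R" for p s
  proof
    assume "contains p s"
    then obtain xs where "subseq xs p" "length xs = length s"
      by (auto simp: contains_iff_subseq order_isomorphic_def)
    then have "length s \<le> length p"
      by (metis list_emb_length)
    moreover have "length p = n"
      using that(1) by (simp add: perms_def distinct_card[symmetric])
    ultimately show False
      using assms that(2) by auto
  qed
  then show ?thesis
    by (auto simp: Av_def avoids_def)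
qed

lemma card_Av_if_patterns_longer: "\<forall>s\<in>R. n < length s \<Longrightarrow> card (Av n R) = fact n"
  by (simp add: Av_eq_perms_if_patterns_longer perms_eq_permutations_of_set)

lemma perms_Cons_max_iff: "Suc n # w \<in> perms (Suc n) \<longleftrightarrow> w \<in> perms n"
proof -
  have "{1..Suc n} = insert (Suc n) {1..n}" "Suc n \<notin> {1..n}"
    by (simp_all add: atLeastAtMostSuc_conv)
  then have "insert (Suc n) (set w) = {1..Suc n} \<and> Suc n \<notin> set w \<longleftrightarrow> set w = {1..n}"
    by (metis insert_ident)
  then show ?thesis
    unfolding perms_def by (simp only: mem_Collect_eq distinct.simps list.set) blast
qed

lemma perms_insert_max_iff: "u @ Suc n # v \<in> perms (Suc n) \<longleftrightarrow> u @ v \<in> perms n"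
proof -
  have "u @ Suc n # v \<in> perms (Suc n) \<longleftrightarrow> Suc n # u @ v \<in> perms (Suc n)"
    unfolding perms_def by auto
  then show ?thesis
    by (simp add: perms_Cons_max_iff)
qed

lemma perms_Suc_split:
  assumes "p \<in> perms (Suc n)"
  obtains u v where "p = u @ Suc n # v" "u @ v \<in> perms n"
proof -
  have "Suc n \<in> set p"
    using assms by (simp add: perms_def)
  then obtain u v where "p = u @ Suc n # v"
    by (meson split_list)
  with assms that show thesis
    by (simp add: perms_insert_max_iff)
qed

lemma perms_set_less_Suc: "p \<in> perms n \<Longrightarrow> \<forall>x\<in>set p. x < Suc n"
  by (auto simp: perms_def)

lemma perms_one_Suc_iff: "1 # map Suc w \<in> perms (Suc n) \<longleftrightarrow> w \<in> perms n"
proof -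
  have "insert 1 (Suc ` set w) = {1..Suc n} \<longleftrightarrow> set w = {1..n}" if "0 \<notin> set w"
  proof -
    have "{1..Suc n} = insert 1 (Suc ` {1..n})" "1 \<notin> Suc ` {1..n}" "1 \<notin> Suc ` set w"
      using that by (auto simp: image_Suc_atLeastAtMost atLeastAtMost_insertL)
    then show ?thesis
      by (metis insert_ident inj_image_eq_iff inj_Suc)
  qed
  moreover have "distinct (1 # map Suc w) \<longleftrightarrow> 0 \<notin> set w \<and> distinct w"
    by (auto simp: distinct_map)
  moreover have "set w = {1..n} \<Longrightarrow> 0 \<notin> set w"
    by auto
  ultimately show ?thesis
    unfolding perms_def by (simp only: mem_Collect_eq list.set set_map) blast
qed

lemma snoc_max_in_Av_iff:
  assumes "\<forall>s\<in>R. \<exists>x\<in>set s. last s < x"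
  shows "u @ [Suc n] \<in> Av (Suc n) R \<longleftrightarrow> u \<in> Av n R"
  using assms perms_insert_max_iff[of u n "[]"] contains_snoc_greater_iff[OF perms_set_less_Suc]
  by (auto simp: Av_def avoids_def)

lemma Cons_max_in_Av_iff:
  assumes "\<forall>s\<in>R. \<exists>x\<in>set s. hd s < x"
  shows "Suc n # v \<in> Av (Suc n) R \<longleftrightarrow> v \<in> Av n R"
  using assms perms_insert_max_iff[of "[]" n v] contains_Cons_greater_iff[OF perms_set_less_Suc]
  by (auto simp: Av_def avoids_def)

lemma card_snoc_Cons_max:
  assumes "1 \<le> n" "X \<subseteq> perms n"
  shows "card ((\<lambda>u. u @ [Suc n]) ` X \<union> Cons (Suc n) ` X) = 2 * card X"
proof -
  have "u @ [Suc n] \<noteq> Suc n # v" if "u \<in> X" for u v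
  proof
    assume eq: "u @ [Suc n] = Suc n # v"
    have "set u = {1..n}"
      using that assms(2) by (auto simp: perms_def)
    with assms(1) have "u \<noteq> []"
      by auto
    with eq have "Suc n \<in> set u"
      by (cases u) auto
    with \<open>set u = {1..n}\<close> show False
      by auto
  qed
  then have "(\<lambda>u. u @ [Suc n]) ` X \<inter> Cons (Suc n) ` X = {}"
    by blast
  moreover have "finite X"
    using assms(2) finite_perms by (rule finite_subset)
  ultimately show ?thesis
    by (simp add: card_Un_disjoint card_image inj_on_def)
qed


section \<open>Counting\<close>

abbreviation Av_132_231 :: "nat \<Rightarrow> nat list set" where
  "Av_132_231 n \<equiv> Av n {[1,3,2],[2,3,1]}"

abbreviation Av_1243_2143_231 :: "nat \<Rightarrow> nat list set" where
  "Av_1243_2143_231 n \<equiv> Av n {[1,2,4,3],[2,1,4,3],[2,3,1]}"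

lemma Av_132_231_Suc:
  "Av_132_231 (Suc n) = (\<lambda>u. u @ [Suc n]) ` Av_132_231 n \<union> Cons (Suc n) ` Av_132_231 n"
proof (intro equalityI subsetI)
  fix p assume p: "p \<in> Av_132_231 (Suc n)"
  then obtain u v where p_eq: "p = u @ Suc n # v" and uv: "u @ v \<in> perms n"
    by (auto simp: Av_def elim: perms_Suc_split)
  have "u = [] \<or> v = []"
  proof (rule ccontr)
    assume "\<not> (u = [] \<or> v = [])"
    then obtain x y where x: "x \<in> set u" and y: "y \<in> set v"
      using hd_in_set by blast
    have "x \<noteq> y"
      using uv x y by (auto simp: perms_def)
    have "x < Suc n" "y < Suc n"
      using perms_set_less_Suc[OF uv] x y by auto
    have "\<not> contains p [2,3,1]" "\<not> contains p [1,3,2]"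
      using p by (auto simp: Av_def avoids_def)
    with \<open>x \<noteq> y\<close> \<open>x < Suc n\<close> x y have "x < y"
      using not_contains_231_split_less unfolding p_eq by blast
    moreover have "subseq ([x] @ [Suc n, y]) p"
      unfolding p_eq using x y by (intro list_emb_append_mono) (simp_all add: subseq_singleton_left)
    ultimately have "contains p [1,3,2]"
      using \<open>y < Suc n\<close> unfolding contains_132 by auto
    with \<open>\<not> contains p [1,3,2]\<close> show False
      by contradiction
  qed
  with p show "p \<in> (\<lambda>u. u @ [Suc n]) ` Av_132_231 n \<union> Cons (Suc n) ` Av_132_231 n"
    unfolding p_eq by (auto simp: snoc_max_in_Av_iff Cons_max_in_Av_iff)
qed (auto simp: snoc_max_in_Av_iff Cons_max_in_Av_iff)

lemma card_Av_132_231: "1 \<le> n \<Longrightarrow> card (Av_132_231 n) = 2 ^ (n - 1)"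
proof (induction n rule: nat_induct_at_least)
  case base
  show ?case
    by (simp add: card_Av_if_patterns_longer)
next
  case (Suc n)
  have "card (Av_132_231 (Suc n)) = 2 * card (Av_132_231 n)"
    unfolding Av_132_231_Suc using Suc.hyps by (intro card_snoc_Cons_max) (auto simp: Av_def)
  with Suc show ?case
    by (cases n) auto
qed

lemma one_max_shift_in_Av_iff:
  assumes "1 \<le> n"
  shows "1 # Suc n # map Suc w \<in> Av_1243_2143_231 (Suc n) \<longleftrightarrow> w \<in> Av_132_231 (n - 1)"
proof -
  obtain k where n: "n = Suc k"
    using assms by (cases n) auto
  have mono_Suc: "strict_mono Suc"
    by (simp add: strict_mono_Suc_iff)
  define q where "q = Suc n # map Suc w"
  have perm: "1 # q \<in> perms (Suc n) \<longleftrightarrow> w \<in> perms k"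
    using perms_insert_max_iff[of "[1]" n "map Suc w"] perms_one_Suc_iff[of w k]
    by (simp add: q_def n)
  have contains_iffs: "contains (1 # q) [2,3,1] \<longleftrightarrow> contains w [2,3,1]"
      "contains (1 # q) [1,2,4,3] \<longleftrightarrow> contains w [1,3,2]"
      "contains (1 # q) [2,1,4,3] \<Longrightarrow> contains w [1,3,2]"
    if "w \<in> perms k"
  proof -
    have below: "\<forall>x\<in>set (map Suc w). x < Suc n"
      using perms_set_less_Suc[OF that] by (auto simp: n)
    have q_greater: "\<forall>x\<in>set q. 1 < x"
      using that by (auto simp: q_def n perms_def)
    have "contains (1 # q) [2,3,1] \<longleftrightarrow> contains q [2,3,1]"
      using q_greater by (rule contains_Cons_less_iff) simp
    also have "\<dots> \<longleftrightarrow> contains (map Suc w) [2,3,1]"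
      unfolding q_def using below by (rule contains_Cons_greater_iff) simp
    finally show "contains (1 # q) [2,3,1] \<longleftrightarrow> contains w [2,3,1]"
      by (simp add: contains_map_strict_mono[OF mono_Suc])
    have 132: "contains q [1,3,2] \<longleftrightarrow> contains w [1,3,2]"
      unfolding q_def using contains_Cons_greater_iff[OF below]
      by (simp add: contains_map_strict_mono[OF mono_Suc])
    show "contains (1 # q) [1,2,4,3] \<longleftrightarrow> contains w [1,3,2]"
      using contains_Cons_less_1243_iff[OF q_greater] 132 by simp
    show "contains (1 # q) [2,1,4,3] \<Longrightarrow> contains w [1,3,2]"
      using contains_Cons_2143_imp_132 132 by blast
  qed
  show ?thesis
    unfolding q_def[symmetric] using perm contains_iffs
    by (auto simp: Av_def avoids_def n)
qed

lemma Av_1243_2143_231_before_max: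
  assumes p: "u @ Suc n # v \<in> Av_1243_2143_231 (Suc n)" and "v \<noteq> []"
  shows "u = [] \<or> u = [1]"
proof -
  have uv: "u @ v \<in> perms n"
    using p by (simp add: Av_def perms_insert_max_iff)
  have avoids: "\<not> contains (u @ Suc n # v) [2,3,1]"
      "\<not> (contains (u @ Suc n # v) [1,2,4,3] \<or> contains (u @ Suc n # v) [2,1,4,3])"
    using p by (auto simp: Av_def avoids_def)
  have sep: "x < y" if x: "x \<in> set u" and y: "y \<in> set v" for x y
  proof -
    have "x \<noteq> y"
      using uv x y by (auto simp: perms_def)
    moreover have "x < Suc n"
      using perms_set_less_Suc[OF uv] x by auto
    ultimately show "x < y"
      using not_contains_231_split_less avoids(1) x y by blast
  qed
  obtain y where y: "y \<in> set v"
    using \<open>v \<noteq> []\<close> hd_in_set by blast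
  consider "u = []" | x where "u = [x]" | x1 x2 u' where "u = x1 # x2 # u'"
    by (cases u rule: remdups_adj.cases) auto
  then show ?thesis
  proof cases
    case 1
    then show ?thesis by simp
  next
    case (2 x)
    have "1 \<in> set (x # v)" "1 \<le> x"
      using uv y 2 by (auto simp: perms_def)
    with sep 2 have "x = 1"
      by fastforce
    with 2 show ?thesis
      by simp
  next
    case (3 x1 x2 u')
    have "subseq ([x1, x2] @ [Suc n, y]) (u @ Suc n # v)"
      unfolding 3 using y by (intro list_emb_append_mono) (simp_all add: subseq_singleton_left)
    moreover have "x1 \<noteq> x2"
      using uv 3 by (auto simp: perms_def)
    moreover have "x1 < y" "x2 < y"
      using sep y 3 by auto
    moreover have "y < Suc n"
      using perms_set_less_Suc[OF uv] y by auto
    ultimately show ?thesis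
      using subseq_imp_contains_1243_or_2143 avoids(2) by (metis append_Cons append_Nil)
  qed
qed

lemma Av_1243_2143_231_Suc:
  assumes "2 \<le> n"
  shows "Av_1243_2143_231 (Suc n) = (\<lambda>u. u @ [Suc n]) ` Av_1243_2143_231 n
    \<union> Cons (Suc n) ` Av_1243_2143_231 n \<union> (\<lambda>w. 1 # Suc n # map Suc w) ` Av_132_231 (n - 1)"
    (is "_ = ?snoc \<union> ?Cons \<union> ?shift")
proof (intro equalityI subsetI)
  fix p assume p: "p \<in> Av_1243_2143_231 (Suc n)"
  then obtain u v where p_eq: "p = u @ Suc n # v" and uv: "u @ v \<in> perms n"
    by (auto simp: Av_def elim: perms_Suc_split)
  from p consider "v = []" | "u = []" | "u = [1]"
    unfolding p_eq using Av_1243_2143_231_before_max by blast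
  then show "p \<in> ?snoc \<union> ?Cons \<union> ?shift"
  proof cases
    case 1
    with p show ?thesis
      unfolding p_eq by (auto simp: snoc_max_in_Av_iff)
  next
    case 2
    with p show ?thesis
      unfolding p_eq by (auto simp: Cons_max_in_Av_iff)
  next
    case 3
    have "\<forall>y\<in>set v. y \<noteq> 0"
      using uv by (auto simp: perms_def)
    then obtain w where w: "v = map Suc w"
      by (metis ex_map_conv not0_implies_Suc)
    from p assms have "w \<in> Av_132_231 (n - 1)"
      unfolding p_eq 3 w using one_max_shift_in_Av_iff[of n w] by simp
    then show ?thesis
      unfolding p_eq 3 w by simp
  qed
next
  fix p assume "p \<in> ?snoc \<union> ?Cons \<union> ?shift"
  then consider u where "u \<in> Av_1243_2143_231 n" "p = u @ [Suc n]"
    | v where "v \<in> Av_1243_2143_231 n" "p = Suc n # v"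
    | w where "w \<in> Av_132_231 (n - 1)" "p = 1 # Suc n # map Suc w"
    by blast
  then show "p \<in> Av_1243_2143_231 (Suc n)"
  proof cases
    case 1
    then show ?thesis
      by (simp add: snoc_max_in_Av_iff)
  next
    case 2
    then show ?thesis
      by (simp add: Cons_max_in_Av_iff)
  next
    case (3 w)
    with one_max_shift_in_Av_iff[of n w] assms show ?thesis
      by simp
  qed
qed

lemma card_Av_1243_2143_231_Suc:
  assumes "2 \<le> n"
  shows "card (Av_1243_2143_231 (Suc n)) = 2 * card (Av_1243_2143_231 n) + 2 ^ (n - 2)"
proof -
  let ?X = "(\<lambda>u. u @ [Suc n]) ` Av_1243_2143_231 n \<union> Cons (Suc n) ` Av_1243_2143_231 n"
  let ?Y = "(\<lambda>w. 1 # Suc n # map Suc w) ` Av_132_231 (n - 1)"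
  have "1 # Suc n # map Suc w \<noteq> u @ [Suc n]" if "w \<in> Av_132_231 (n - 1)" for u w
  proof
    assume eq: "1 # Suc n # map Suc w = u @ [Suc n]"
    have "set w = {1..n - 1}"
      using that by (auto simp: Av_def perms_def)
    with assms have "w \<noteq> []"
      by auto
    with eq have "Suc (last w) = Suc n"
      by (metis last_ConsR last_map last_snoc list.map_disc_iff list.discI)
    with \<open>set w = {1..n - 1}\<close> \<open>w \<noteq> []\<close> show False
      using last_in_set by fastforce
  qed
  then have "?X \<inter> ?Y = {}"
    using assms by auto
  moreover have "card ?X = 2 * card (Av_1243_2143_231 n)"
    using assms by (intro card_snoc_Cons_max) (auto simp: Av_def)
  moreover have "card ?Y = 2 ^ (n - 2)"
    using assms card_Av_132_231[of "n - 1"] by (simp add: card_image inj_on_def)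
  ultimately show ?thesis
    unfolding Av_1243_2143_231_Suc[OF assms] by (simp add: card_Un_disjoint finite_Av)
qed

lemma card_Av_1243_2143_231: "2 \<le> n \<Longrightarrow> 8 * card (Av_1243_2143_231 n) = (n + 2) * 2 ^ n"
proof (induction n rule: nat_induct_at_least)
  case base
  show ?case
    by (simp add: card_Av_if_patterns_longer)
next
  case (Suc n)
  then obtain k where n: "n = k + 2"
    using le_Suc_ex by (metis add.commute)
  with Suc card_Av_1243_2143_231_Suc[of n] show ?case
    by (simp add: algebra_simps)
qed

lemma card_Av_1243_2143_231_recurrence:
  assumes "2 \<le> n"
  shows "card (Av_1243_2143_231 (n + 2)) + 4 * card (Av_1243_2143_231 n) = 4 * card (Av_1243_2143_231 (n + 1))"
  using assms card_Av_1243_2143_231[of "n + 2"] card_Av_1243_2143_231[of "n + 1"] card_Av_1243_2143_231[of n]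
  by (simp add: power_add algebra_simps)

lemma of_nat_card_Av_1243_2143_231:
  assumes "2 \<le> n"
  shows "(of_nat (card (Av_1243_2143_231 n)) :: 'a::field_char_0) = of_nat (n + 2) * 2 ^ n / 8"
proof -
  have "(of_nat (8 * card (Av_1243_2143_231 n)) :: 'a) = of_nat ((n + 2) * 2 ^ n)"
    using card_Av_1243_2143_231[OF assms] by (rule arg_cong)
  then have "8 * (of_nat (card (Av_1243_2143_231 n)) :: 'a) = of_nat (n + 2) * 2 ^ n"
    by (simp only: of_nat_mult of_nat_power of_nat_numeral)
  then show ?thesis
    by (simp add: field_simps)
qed


section \<open>The generating function\<close>

lemma fps_eq_of_recurrence:
  fixes a :: "nat \<Rightarrow> 'a::field"
  assumes init: "a 0 = 1" "a 1 = 1" "a 2 = 2" "a 3 = 5"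
    and rec: "\<And>n. 2 \<le> n \<Longrightarrow> a (n + 2) = 4 * a (n + 1) - 4 * a n"
  shows "Abs_fps a = 1 + fps_X * (fps_X - 1)^2 / (2 * fps_X - 1)^2"
proof -
  define G where "G = Abs_fps a - 1"
  have square: "(2 * fps_X - 1)^2 = 1 - 4 * fps_X + 4 * (fps_X^2 :: 'a fps)"
    and numerator: "fps_X * (fps_X - 1)^2 = fps_X - 2 * fps_X^2 + (fps_X^3 :: 'a fps)"
    by (simp_all add: power2_eq_square power3_eq_cube algebra_simps)
  have coeffs: "G - 4 * (fps_X * G) + 4 * (fps_X^2 * G) = fps_X - 2 * fps_X^2 + fps_X^3"
  proof (rule fps_ext)
    fix k
    show "fps_nth (G - 4 * (fps_X * G) + 4 * (fps_X^2 * G)) k = fps_nth (fps_X - 2 * fps_X^2 + fps_X^3) k"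
    proof (cases "4 \<le> k")
      case True
      then have "2 \<le> k - 2" "k - 2 + 2 = k" "k - 2 + 1 = k - 1"
        by simp_all
      then show ?thesis
        using True rec[of "k - 2"] by (simp add: G_def numeral_fps_const fps_X_power_mult_nth)
    next
      case False
      then consider "k = 0" | "k = 1" | "k = 2" | "k = 3"
        by linarith
      then show ?thesis
        by cases (simp_all add: G_def numeral_fps_const fps_X_power_mult_nth init[simplified])
    qed
  qed
  have key: "G * (2 * fps_X - 1)^2 = fps_X * (fps_X - 1)^2"
    unfolding square numerator coeffs[symmetric] by (simp add: algebra_simps)
  have nonzero: "(2 * fps_X - 1)^2 \<noteq> (0 :: 'a fps)"
  proof
    assume "(2 * fps_X - 1)^2 = (0 :: 'a fps)"
    then have "fps_nth (2 * fps_X - 1 :: 'a fps) 0 = 0"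
      by simp
    then show False
      by simp
  qed
  have "fps_X * (fps_X - 1)^2 / (2 * fps_X - 1)^2 = G"
    unfolding key[symmetric] using nonzero by simp
  then show ?thesis
    by (simp add: G_def)
qed

theorem mainTheorem11:
  shows "Abs_fps (\<lambda>n. of_nat (card (Av n {[1,2,4,3],[2,1,4,3],[2,3,1]})) :: rat)
           = 1 + fps_X * (fps_X - 1)^2 / (2 * fps_X - 1)^2
         \<and> (\<forall>n\<ge>2. (of_nat (card (Av n {[1,2,4,3],[2,1,4,3],[2,3,1]})) :: rat) = of_nat (n + 2) * 2 powi (int n - 3))"
proof (intro conjI allI impI)
  show "Abs_fps (\<lambda>n. of_nat (card (Av_1243_2143_231 n)) :: rat)
      = 1 + fps_X * (fps_X - 1)^2 / (2 * fps_X - 1)^2"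
  proof (rule fps_eq_of_recurrence)
    show "(of_nat (card (Av_1243_2143_231 3)) :: rat) = 5"
      using card_Av_1243_2143_231[of 3] by simp
  next
    fix n :: nat
    assume "2 \<le> n"
    from arg_cong[OF card_Av_1243_2143_231_recurrence[OF this], of rat_of_nat]
    show "(of_nat (card (Av_1243_2143_231 (n + 2))) :: rat)
        = 4 * of_nat (card (Av_1243_2143_231 (n + 1))) - 4 * of_nat (card (Av_1243_2143_231 n))"
      by (simp add: algebra_simps)
  qed (simp_all add: card_Av_if_patterns_longer)
next
  fix n :: nat
  assume "2 \<le> n"
  then show "(of_nat (card (Av_1243_2143_231 n)) :: rat) = of_nat (n + 2) * 2 powi (int n - 3)"
    using of_nat_card_Av_1243_2143_231[of n] by (simp add: power_int_diff)
qed

end
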